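(* Fix $L>0$ and define $$\Delta_n(FP-ES;L)=\max_{T\in RB(n)}\max_{i\in[n]}\sup_{l>0:\ \sum_e l(e)=L}\{FP_T(i)-ES_T(i)\},$$ and $\Delta_n(ES-FP;L)$ analogously with $ES_T(i)-FP_T(i)$. The suprema run over strictly positive edge-length assignments with total length $L$. (i) For $n\ge 2$, $\Delta_n(FP-ES;L)=\lambda_n L$, where $\lambda_n=0$ for $n=2,3$, $\lambda_4=\tfrac1{12}$, $\lambda_5=\tfrac18$, and $\lambda_n=\tfrac{11}{80}$ for $n\ge 6$. For $n\ge 3$, $\Delta_n(ES-FP;L)=\left(\tfrac12-\tfrac1{n-1}\right)L$. (ii) If the suprema are restricted to positive edge-length assignments with total length $L$ that also satisfy (MC), then the same formulas hold with $L$ replaced by $L/2$. That is, $\Delta_n(FP-ES;L)=\lambda_n L/2$ for $n\ge2$, and $\Delta_n(ES-FP;L)=\left(\tfrac12-\tfrac1{n-1}\right)L/2$ for $n\ge 3$.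
   Context: $RB(n)$ is the set of rooted binary phylogenetic trees with leaf set $[n]=\{1,\dots,n\}$: rooted trees in which every non-leaf vertex has out-degree exactly 2, leaves labelled bijectively by $[n]$, identified up to label-preserving isomorphism. Each edge has length $l(e)>0$, and $n(e)$ is the number of leaves descended from $e$. $FP_T(i)=\sum_{e\in P(T;\rho,i)} l(e)/n(e)$ and $ES_T(i)=\sum_{e\in P(T;\rho,i)} l(e)/2^{k(e,i)}$, where $P(T;\rho,i)$ is the root-to-$i$ path and $k(e,i)$ is the number of edges strictly between $e$ and $i$ on that path. (MC): all root-to-leaf path lengths are equal. *)

theory Defs
  imports Complex_Main
begin

text \<open>Vertices are addressed by their position: the list of
left/right (False/True) choices on the path from the root. The edges are in bijection
with the non-root vertices (each edge is identified with its lower endpoint).\<close>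

datatype btree = Leaf nat | Node btree btree

fun leaf_list :: "btree \<Rightarrow> nat list" where
  "leaf_list (Leaf a) = [a]"
| "leaf_list (Node t1 t2) = leaf_list t1 @ leaf_list t2"

definition leaves :: "btree \<Rightarrow> nat set" where
  "leaves t = set (leaf_list t)"

text \<open>RB(n): leaves labelled bijectively by {1..n}. Distinct datatype values that are
isomorphic (child swaps) represent the same phylogenetic tree; this does not affect
maxima over RB(n).\<close>
definition RB :: "nat \<Rightarrow> btree set" where
  "RB n = {t. distinct (leaf_list t) \<and> set (leaf_list t) = {1..n}}"

fun positions :: "btree \<Rightarrow> bool list set" where
  "positions (Leaf a) = {[]}"
| "positions (Node t1 t2) = {[]} \<union> Cons False ` positions t1 \<union> Cons True ` positions t2"

fun subtree :: "btree \<Rightarrow> bool list \<Rightarrow> btree" where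
  "subtree t [] = t"
| "subtree (Node t1 t2) (False # p) = subtree t1 p"
| "subtree (Node t1 t2) (True # p) = subtree t2 p"
| "subtree (Leaf a) (_ # p) = Leaf a"

definition edges :: "btree \<Rightarrow> bool list set" where
  "edges t = positions t - {[]}"

definition leafpos :: "btree \<Rightarrow> nat \<Rightarrow> bool list" where
  "leafpos t i = (THE p. p \<in> positions t \<and> subtree t p = Leaf i)"

definition path_edges :: "btree \<Rightarrow> nat \<Rightarrow> bool list set" where
  "path_edges t i = {e \<in> edges t. take (length e) (leafpos t i) = e}"

definition ndesc :: "btree \<Rightarrow> bool list \<Rightarrow> nat" where
  "ndesc t e = card (leaves (subtree t e))"

definition kdist :: "btree \<Rightarrow> bool list \<Rightarrow> nat \<Rightarrow> nat" where
  "kdist t e i = length (leafpos t i) - length e"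

definition FP :: "btree \<Rightarrow> (bool list \<Rightarrow> real) \<Rightarrow> nat \<Rightarrow> real" where
  "FP t l i = (\<Sum>e\<in>path_edges t i. l e / real (ndesc t e))"

definition ES :: "btree \<Rightarrow> (bool list \<Rightarrow> real) \<Rightarrow> nat \<Rightarrow> real" where
  "ES t l i = (\<Sum>e\<in>path_edges t i. l e / 2 ^ kdist t e i)"

definition admissible :: "btree \<Rightarrow> real \<Rightarrow> (bool list \<Rightarrow> real) \<Rightarrow> bool" where
  "admissible t L l \<longleftrightarrow> (\<forall>e\<in>edges t. l e > 0) \<and> (\<Sum>e\<in>edges t. l e) = L"

definition root_leaf_dist :: "btree \<Rightarrow> (bool list \<Rightarrow> real) \<Rightarrow> nat \<Rightarrow> real" where
  "root_leaf_dist t l i = (\<Sum>e\<in>path_edges t i. l e)"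

definition MC :: "btree \<Rightarrow> (bool list \<Rightarrow> real) \<Rightarrow> bool" where
  "MC t l \<longleftrightarrow> (\<forall>i\<in>leaves t. \<forall>j\<in>leaves t. root_leaf_dist t l i = root_leaf_dist t l j)"

text \<open>Delta_n(FP-ES;L) and Delta_n(ES-FP;L): max over trees and leaves of the sup over
admissible lengths = sup of the union of all these values.  The flag mc restricts to
lengths satisfying (MC).\<close>
definition Delta_FP_ES :: "bool \<Rightarrow> nat \<Rightarrow> real \<Rightarrow> real" where
  "Delta_FP_ES mc n L = Sup {FP t l i - ES t l i | t l i.
      t \<in> RB n \<and> i \<in> {1..n} \<and> admissible t L l \<and> (mc \<longrightarrow> MC t l)}"

definition Delta_ES_FP :: "bool \<Rightarrow> nat \<Rightarrow> real \<Rightarrow> real" where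
  "Delta_ES_FP mc n L = Sup {ES t l i - FP t l i | t l i.
      t \<in> RB n \<and> i \<in> {1..n} \<and> admissible t L l \<and> (mc \<longrightarrow> MC t l)}"

definition lambda :: "nat \<Rightarrow> real" where
  "lambda n = (if n \<le> 3 then 0 else if n = 4 then 1/12 else if n = 5 then 1/8 else 11/80)"

end

theory Submission
  imports Defs "HOL-Library.Sublist"
begin

text \<open>On the path to leaf i, FP - ES is the sum of l(e) (1/n(e) - 1/2^k(e,i)), and
k(e,i) < n(e) < n for every edge e on the path. Each coefficient is therefore at most the maximum
of 1/m - 1/2^(m-1) over m < n, which is lambda n (for ES - FP the bound is 1/2 - 1/(n-1)), so the
difference is at most that coefficient times the length of the path. This length is at most L,
and at most L/2 under (MC), because the paths into the two subtrees of the root are edge-disjoint.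

The bounds are approached on a tree whose two root subtrees are caterpillars: concentrate the
total length on the top edge of the path to a suitable leaf (under (MC): half of it on each root
edge) and mix in a small multiple of a strictly positive assignment satisfying (MC), which makes
all edge lengths positive and preserves (MC).\<close>

lemma Cons_mem_image_Cons [simp]: "x # xs \<in> Cons y ` A \<longleftrightarrow> x = y \<and> xs \<in> A"
  by auto

lemma finite_positions [simp]: "finite (positions t)"
  by (induction t) auto

lemma Nil_in_positions [simp]: "[] \<in> positions t"
  by (cases t) auto

lemma subtree_Leaf [simp]: "subtree (Leaf a) p = Leaf a"
  by (cases p) auto

lemma leaf_list_ne_Nil [simp]: "leaf_list t \<noteq> []"
  by (induction t) auto

lemma subtree_Node_Cons [simp]:
  "subtree (Node t1 t2) (x # p) = subtree (if x then t2 else t1) p"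
  by (cases x) auto

lemma subtree_append: "subtree t (p @ q) = subtree (subtree t p) q"
  by (induction t p rule: subtree.induct) auto

lemma positions_append:
  "p @ q \<in> positions t \<longleftrightarrow> p \<in> positions t \<and> q \<in> positions (subtree t p)"
  by (induction t p rule: subtree.induct) auto

lemma take_in_positions: "p \<in> positions t \<Longrightarrow> take j p \<in> positions t"
  using positions_append[of "take j p" "drop j p" t] by simp

lemma sublist_leaf_list_subtree: "sublist (leaf_list (subtree t p)) (leaf_list t)"
  by (induction t p rule: subtree.induct)
    (auto intro: sublist_order.order.trans)

lemma distinct_leaf_list_subtree:
  "distinct (leaf_list t) \<Longrightarrow> distinct (leaf_list (subtree t p))"
  using sublist_leaf_list_subtree[of t p] by (auto simp: sublist_def)

lemma length_leaf_list_pos: "0 < length (leaf_list t)"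
  by simp

lemma length_lt_length_leaf_list: "q \<in> positions s \<Longrightarrow> length q < length (leaf_list s)"
proof (induction s arbitrary: q)
  case (Node s1 s2)
  show ?case
  proof (cases q)
    case (Cons x r)
    then show ?thesis
      using Node.prems Node.IH[of r] length_leaf_list_pos[of s1] length_leaf_list_pos[of s2]
      by (cases x) (simp_all del: length_greater_0_conv)
  qed simp
qed simp

lemma length_leaf_list_subtree_less:
  assumes "p \<in> positions t" "p \<noteq> []"
  shows "length (leaf_list (subtree t p)) < length (leaf_list t)"
proof -
  obtain t1 t2 x q where t: "t = Node t1 t2" and p: "p = x # q"
    using assms by (cases t; cases p) auto
  have "0 < length (leaf_list t1)" "0 < length (leaf_list t2)"
    by (rule length_leaf_list_pos)+
  moreover have "length (leaf_list (subtree t1 q)) \<le> length (leaf_list t1)"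
    "length (leaf_list (subtree t2 q)) \<le> length (leaf_list t2)"
    by (rule sublist_length_le[OF sublist_leaf_list_subtree])+
  ultimately show ?thesis
    unfolding t p by (cases x) (simp_all del: length_greater_0_conv)
qed

lemma leaf_in_leaf_list: "subtree t p = Leaf i \<Longrightarrow> i \<in> set (leaf_list t)"
  using set_mono_sublist[OF sublist_leaf_list_subtree, of t p] by simp

lemma leaf_position_exists: "i \<in> set (leaf_list t) \<Longrightarrow> \<exists>p\<in>positions t. subtree t p = Leaf i"
  by (induction t) force+

lemma leaf_position_unique:
  "\<lbrakk>distinct (leaf_list t); p \<in> positions t; q \<in> positions t;
    subtree t p = Leaf i; subtree t q = Leaf i\<rbrakk> \<Longrightarrow> p = q"
proof (induction t arbitrary: p q)
  case (Node t1 t2)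
  then show ?case
    by (cases p; cases q) (auto 0 3 dest: leaf_in_leaf_list split: if_splits)
qed auto

lemma leafpos:
  assumes "distinct (leaf_list t)" "i \<in> set (leaf_list t)"
  shows "leafpos t i \<in> positions t" "subtree t (leafpos t i) = Leaf i"
proof -
  have "\<exists>!p. p \<in> positions t \<and> subtree t p = Leaf i"
    using leaf_position_exists[OF assms(2)] leaf_position_unique[OF assms(1)] by blast
  from theI'[OF this] show "leafpos t i \<in> positions t" "subtree t (leafpos t i) = Leaf i"
    unfolding leafpos_def by blast+
qed

lemma leafpos_eqI:
  "\<lbrakk>distinct (leaf_list t); p \<in> positions t; subtree t p = Leaf i\<rbrakk> \<Longrightarrow> leafpos t i = p"
  unfolding leafpos_def by (rule the_equality) (auto intro: leaf_position_unique)

lemma leafpos_Node: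
  assumes "distinct (leaf_list (Node t1 t2))"
  shows "i \<in> set (leaf_list t1) \<Longrightarrow> leafpos (Node t1 t2) i = False # leafpos t1 i"
    and "i \<in> set (leaf_list t2) \<Longrightarrow> leafpos (Node t1 t2) i = True # leafpos t2 i"
  using assms by (auto intro!: leafpos_eqI dest: leafpos[rotated])

lemma path_edges_subset_edges: "path_edges t i \<subseteq> edges t"
  unfolding path_edges_def by blast

lemma finite_edges [simp]: "finite (edges t)"
  unfolding edges_def by simp

lemma finite_path_edges [simp]: "finite (path_edges t i)"
  using finite_subset[OF path_edges_subset_edges] by simp

lemma take_one_path_edge: "e \<in> path_edges t i \<Longrightarrow> take 1 e = take 1 (leafpos t i)"
  unfolding path_edges_def edges_def by (cases e) (auto dest: arg_cong[of _ _ "take 1"])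

lemma path_edges_eq_image:
  assumes "leafpos t i \<in> positions t"
  shows "path_edges t i = (\<lambda>j. take (Suc j) (leafpos t i)) ` {..<length (leafpos t i)}"
proof (intro set_eqI iffI)
  fix e assume "e \<in> path_edges t i"
  then have e: "e \<noteq> []" "take (length e) (leafpos t i) = e"
    by (auto simp: path_edges_def edges_def)
  have "length (take (length e) (leafpos t i)) \<le> length (leafpos t i)"
    by simp
  then have "length e \<le> length (leafpos t i)"
    unfolding e(2) .
  moreover have "Suc (length e - 1) = length e"
    using e(1) by (cases e) simp_all
  ultimately show "e \<in> (\<lambda>j. take (Suc j) (leafpos t i)) ` {..<length (leafpos t i)}"
    using e(2) by (intro image_eqI[of _ _ "length e - 1"]) simp_all
next
  fix e assume "e \<in> (\<lambda>j. take (Suc j) (leafpos t i)) ` {..<length (leafpos t i)}"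
  then show "e \<in> path_edges t i"
    using take_in_positions[OF assms] by (auto simp: path_edges_def edges_def min_def)
qed

lemma sum_path_edges:
  assumes "leafpos t i \<in> positions t"
  shows "(\<Sum>e\<in>path_edges t i. f e) = (\<Sum>j<length (leafpos t i). f (take (Suc j) (leafpos t i)))"
proof -
  have "inj_on (\<lambda>j. take (Suc j) (leafpos t i)) {..<length (leafpos t i)}"
    by (rule inj_onI) (auto dest: arg_cong[of _ _ length])
  then show ?thesis
    unfolding path_edges_eq_image[OF assms] by (simp add: sum.reindex)
qed

lemma leafpos_ne_Nil:
  "\<lbrakk>distinct (leaf_list t); i \<in> set (leaf_list t); t = Node t1 t2\<rbrakk> \<Longrightarrow> leafpos t i \<noteq> []"
  using leafpos(2) by fastforce

lemma top_edge_in_path_edges: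
  assumes "distinct (leaf_list t)" "i \<in> set (leaf_list t)" "t = Node t1 t2"
  shows "take 1 (leafpos t i) \<in> path_edges t i"
  using assms leafpos(1)[OF assms(1,2)] leafpos_ne_Nil[OF assms]
  by (auto simp: path_edges_eq_image)

lemma sum_path_edges_length_one:
  assumes "leafpos t i \<in> positions t" "leafpos t i \<noteq> []"
  shows "(\<Sum>e\<in>path_edges t i. if length e = 1 then f e else 0) = f (take 1 (leafpos t i))"
  using assms by (simp add: sum_path_edges)

lemma ndesc_eq_length: "distinct (leaf_list t) \<Longrightarrow> ndesc t e = length (leaf_list (subtree t e))"
  unfolding ndesc_def leaves_def by (simp add: distinct_card distinct_leaf_list_subtree)

lemma path_edge_ndesc_kdist:
  assumes d: "distinct (leaf_list t)" and i: "i \<in> set (leaf_list t)" and e: "e \<in> path_edges t i"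
  shows "kdist t e i < ndesc t e" "ndesc t e < length (leaf_list t)"
    and "kdist t e i = 0 \<Longrightarrow> ndesc t e = 1"
proof -
  define q where "q = drop (length e) (leafpos t i)"
  have e': "e \<in> positions t" "e \<noteq> []" "take (length e) (leafpos t i) = e"
    using e by (auto simp: path_edges_def edges_def)
  have p: "leafpos t i = e @ q"
    unfolding q_def using append_take_drop_id[of "length e" "leafpos t i"] e'(3) by simp
  have "e @ q \<in> positions t" "subtree t (e @ q) = Leaf i"
    using leafpos[OF d i] p by simp_all
  then have q: "q \<in> positions (subtree t e)" "subtree (subtree t e) q = Leaf i"
    by (simp_all add: positions_append subtree_append)
  have k: "kdist t e i = length q"
    unfolding kdist_def p by simp
  show "kdist t e i < ndesc t e"
    unfolding k ndesc_eq_length[OF d] by (rule length_lt_length_leaf_list[OF q(1)])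
  show "ndesc t e < length (leaf_list t)"
    unfolding ndesc_eq_length[OF d] by (rule length_leaf_list_subtree_less[OF e'(1,2)])
  assume "kdist t e i = 0"
  then show "ndesc t e = 1"
    using q(2) k by (simp add: ndesc_eq_length[OF d])
qed

section \<open>Upper bounds\<close>

lemma RB_distinct: "t \<in> RB n \<Longrightarrow> distinct (leaf_list t)"
  unfolding RB_def by blast

lemma RB_set_leaf_list: "t \<in> RB n \<Longrightarrow> set (leaf_list t) = {1..n}"
  unfolding RB_def by blast

lemma RB_length_leaf_list: "t \<in> RB n \<Longrightarrow> length (leaf_list t) = n"
  unfolding RB_def using distinct_card by fastforce

lemma RB_Node: "t \<in> RB n \<Longrightarrow> 2 \<le> n \<Longrightarrow> \<exists>t1 t2. t = Node t1 t2"
  using RB_length_leaf_list[of t n] by (cases t) auto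

lemma sum_le_total_length:
  "admissible t L l \<Longrightarrow> A \<subseteq> edges t \<Longrightarrow> (\<Sum>e\<in>A. l e) \<le> L"
  unfolding admissible_def by (force intro: sum_mono2 less_imp_le)

definition max_root_leaf_dist :: "bool \<Rightarrow> real \<Rightarrow> real" where
  "max_root_leaf_dist mc L = (if mc then L / 2 else L)"

lemma root_leaf_dist_le_half:
  assumes d: "distinct (leaf_list t)" and t: "t = Node t1 t2" and i: "i \<in> set (leaf_list t)"
    and adm: "admissible t L l" and mc: "MC t l"
  shows "root_leaf_dist t l i \<le> L / 2"
proof -
  obtain j where j: "j \<in> set (leaf_list t)" "take 1 (leafpos t j) \<noteq> take 1 (leafpos t i)"
  proof (cases "i \<in> set (leaf_list t1)")
    case True
    have "hd (leaf_list t2) \<in> set (leaf_list t2)"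
      by simp
    with True d show ?thesis
      by (intro that[of "hd (leaf_list t2)"]) (simp_all add: t leafpos_Node)
  next
    case False
    have "hd (leaf_list t1) \<in> set (leaf_list t1)"
      by simp
    with False d i show ?thesis
      by (intro that[of "hd (leaf_list t1)"]) (simp_all add: t leafpos_Node)
  qed
  have "path_edges t i \<inter> path_edges t j = {}"
  proof (rule equals0I)
    fix e assume "e \<in> path_edges t i \<inter> path_edges t j"
    then show False
      using take_one_path_edge[of e t i] take_one_path_edge[of e t j] j(2) by simp
  qed
  then have "root_leaf_dist t l i + root_leaf_dist t l j = (\<Sum>e\<in>path_edges t i \<union> path_edges t j. l e)"
    unfolding root_leaf_dist_def by (simp add: sum.union_disjoint)
  also have "\<dots> \<le> L"
    using adm path_edges_subset_edges by (intro sum_le_total_length) auto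
  finally have "root_leaf_dist t l i + root_leaf_dist t l j \<le> L" .
  moreover have "root_leaf_dist t l j = root_leaf_dist t l i"
    using mc i j unfolding MC_def leaves_def by blast
  ultimately show ?thesis
    by simp
qed

lemma root_leaf_dist_le_max:
  assumes t: "t \<in> RB n" and n: "2 \<le> n" and i: "i \<in> {1..n}"
    and adm: "admissible t L l" and mc: "mc \<longrightarrow> MC t l"
  shows "root_leaf_dist t l i \<le> max_root_leaf_dist mc L"
proof (cases mc)
  case True
  obtain t1 t2 where t12: "t = Node t1 t2"
    using RB_Node[OF t n] by blast
  have "root_leaf_dist t l i \<le> L / 2"
    using RB_set_leaf_list[OF t] i adm mc True
    by (intro root_leaf_dist_le_half[OF RB_distinct[OF t] t12]) auto
  with True show ?thesis
    by (simp add: max_root_leaf_dist_def)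
next
  case False
  then show ?thesis
    using sum_le_total_length[OF adm path_edges_subset_edges]
    by (simp add: max_root_leaf_dist_def root_leaf_dist_def)
qed

lemma path_sum_le:
  assumes adm: "admissible t L l" and c: "\<And>e. e \<in> path_edges t i \<Longrightarrow> c e \<le> C"
  shows "(\<Sum>e\<in>path_edges t i. l e * c e) \<le> C * root_leaf_dist t l i"
proof -
  have "0 \<le> l e" if "e \<in> path_edges t i" for e
    using adm that path_edges_subset_edges unfolding admissible_def by fastforce
  then have "(\<Sum>e\<in>path_edges t i. l e * c e) \<le> (\<Sum>e\<in>path_edges t i. l e * C)"
    using c by (intro sum_mono mult_left_mono) auto
  then show ?thesis
    by (simp add: root_leaf_dist_def sum_distrib_left mult.commute)
qed

lemma FP_minus_ES:
  "FP t l i - ES t l i = (\<Sum>e\<in>path_edges t i. l e * (1 / real (ndesc t e) - 1 / 2 ^ kdist t e i))"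
  by (simp add: FP_def ES_def right_diff_distrib sum_subtractf)

lemma ES_minus_FP:
  "ES t l i - FP t l i = (\<Sum>e\<in>path_edges t i. l e * (1 / 2 ^ kdist t e i - 1 / real (ndesc t e)))"
  by (simp add: FP_def ES_def right_diff_distrib sum_subtractf)

text \<open>1/m - 1/2^(m-1) increases up to m = 5, where it equals 11/80, and decreases after.\<close>

lemma FP_coefficient_le_lambda:
  fixes k m n :: nat
  assumes "k < m" "m < n"
  shows "1 / real m - 1 / 2 ^ k \<le> lambda n"
proof -
  have "(2::real) ^ k \<le> 2 ^ (m - 1)"
    using assms by (intro power_increasing) auto
  then have "1 / real m - 1 / 2 ^ k \<le> 1 / real m - 1 / 2 ^ (m - 1)"
    by (simp add: frac_le)
  also have "\<dots> \<le> lambda n"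
  proof -
    consider "m \<le> 7" | "8 \<le> m"
      by linarith
    then show ?thesis
    proof cases
      case 1
      then consider "m = 1" | "m = 2" | "m = 3" | "m = 4" | "m = 5" | "m = 6" | "m = 7"
        using assms by linarith
      then show ?thesis
        by cases (use assms in \<open>auto simp: lambda_def\<close>)
    next
      case 2
      then have "1 / real m \<le> 1 / 8" and "lambda n = 11 / 80"
        using assms by (auto simp: frac_le lambda_def)
      moreover have "(0::real) < 1 / 2 ^ (m - 1)"
        by simp
      ultimately show ?thesis
        by linarith
    qed
  qed
  finally show ?thesis .
qed

lemma lambda_attained: "2 \<le> n \<Longrightarrow> \<exists>m. 1 \<le> m \<and> m < n \<and> 1 / real m - 1 / 2 ^ (m - 1) = lambda n"
  unfolding lambda_def
  by (cases "n \<le> 3"; cases "n = 4"; cases "n = 5")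
    (auto intro: exI[of _ 1] exI[of _ 3] exI[of _ 4] exI[of _ 5])

lemma ES_coefficient_le:
  fixes k m n :: nat
  assumes "k < m" "m < n" "k = 0 \<Longrightarrow> m = 1" "3 \<le> n"
  shows "1 / 2 ^ k - 1 / real m \<le> 1 / 2 - 1 / real (n - 1)"
proof (cases "k = 0")
  case True
  with assms show ?thesis
    by (simp add: frac_le)
next
  case False
  have "(2::real) ^ 1 \<le> 2 ^ k"
    using False by (intro power_increasing) auto
  then have "1 / (2::real) ^ k \<le> 1 / 2"
    by (simp add: frac_le)
  moreover have "1 / real (n - 1) \<le> 1 / real m"
    using assms by (simp add: frac_le)
  ultimately show ?thesis
    by (rule diff_mono)
qed

section \<open>Lower bounds\<close>

fun height :: "btree \<Rightarrow> nat" where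
  "height (Leaf a) = 0"
| "height (Node t1 t2) = Suc (max (height t1) (height t2))"

lemma height_subtree_snoc_less:
  assumes "p @ [x] \<in> positions t"
  shows "height (subtree t (p @ [x])) < height (subtree t p)"
proof -
  have "[x] \<in> positions (subtree t p)"
    using assms positions_append by blast
  then show ?thesis
    unfolding subtree_append by (cases "subtree t p") auto
qed

definition height_gap :: "btree \<Rightarrow> bool list \<Rightarrow> real" where
  "height_gap t e = real (height (subtree t (butlast e))) - real (height (subtree t e))"

lemma height_gap_pos: "e \<in> edges t \<Longrightarrow> 0 < height_gap t e"
  using height_subtree_snoc_less[of "butlast e" "last e" t]
  by (simp add: height_gap_def edges_def)

lemma root_leaf_dist_height_gap:
  assumes "distinct (leaf_list t)" "i \<in> set (leaf_list t)"
  shows "root_leaf_dist t (height_gap t) i = real (height t)"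
proof -
  let ?h = "\<lambda>p. real (height (subtree t p))" and ?p = "leafpos t i"
  have "root_leaf_dist t (height_gap t) i = (\<Sum>j<length ?p. ?h (take j ?p) - ?h (take (Suc j) ?p))"
    unfolding root_leaf_dist_def sum_path_edges[OF leafpos(1)[OF assms]]
    by (intro sum.cong) (simp_all add: height_gap_def butlast_take)
  also have "\<dots> = ?h (take 0 ?p) - ?h (take (length ?p) ?p)"
    by (rule sum_lessThan_telescope')
  finally show ?thesis
    using leafpos(2)[OF assms] by simp
qed

lemma exists_admissible_MC:
  assumes d: "distinct (leaf_list t)" and E: "edges t \<noteq> {}" and L: "0 < L"
  shows "\<exists>l. admissible t L l \<and> MC t l"
proof -
  define G where "G = (\<Sum>e\<in>edges t. height_gap t e)"
  have G: "0 < G"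
    unfolding G_def using E height_gap_pos by (intro sum_pos) auto
  define l where "l e = L / G * height_gap t e" for e
  have "(\<Sum>e\<in>edges t. l e) = L"
    unfolding l_def sum_distrib_left[symmetric] G_def[symmetric] using G by simp
  then have "admissible t L l"
    using G L height_gap_pos by (simp add: admissible_def l_def)
  moreover have "root_leaf_dist t l i = L / G * real (height t)" if "i \<in> leaves t" for i
    using root_leaf_dist_height_gap[OF d, of i] that
    unfolding root_leaf_dist_def l_def leaves_def sum_distrib_left[symmetric] by simp
  ultimately show ?thesis
    unfolding MC_def by auto
qed

lemma exists_top_concentrated_lengths:
  assumes d: "distinct (leaf_list t)" and i: "i \<in> set (leaf_list t)" and t: "t = Node t1 t2"
    and L: "0 \<le> L"
  shows "\<exists>l. (\<forall>e\<in>edges t. 0 \<le> l e) \<and> (\<Sum>e\<in>edges t. l e) = L \<and> (mc \<longrightarrow> MC t l) \<and>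
           (\<Sum>e\<in>path_edges t i. l e * c e) = c (take 1 (leafpos t i)) * max_root_leaf_dist mc L"
proof (cases mc)
  case True
  define l where "l e = (if length e = 1 then L / 2 else 0)" for e :: "bool list"
  have "{e \<in> edges t. length e = 1} = {[False], [True]}"
    by (auto simp: t edges_def length_Suc_conv)
  then have "(\<Sum>e\<in>edges t. l e) = L"
    by (simp add: l_def sum.inter_filter[symmetric])
  moreover have dist: "root_leaf_dist t l j = L / 2" if "j \<in> leaves t" for j
  proof -
    have j: "j \<in> set (leaf_list t)"
      using that by (simp add: leaves_def)
    show ?thesis
      using sum_path_edges_length_one[OF leafpos(1)[OF d j] leafpos_ne_Nil[OF d j t], of "\<lambda>_. L / 2"]
      by (simp add: root_leaf_dist_def l_def)
  qed
  moreover have "(\<Sum>e\<in>path_edges t i. l e * c e)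
      = (\<Sum>e\<in>path_edges t i. if length e = 1 then L / 2 * c e else 0)"
    by (intro sum.cong) (simp_all add: l_def)
  moreover have "\<dots> = L / 2 * c (take 1 (leafpos t i))"
    by (rule sum_path_edges_length_one[OF leafpos(1)[OF d i] leafpos_ne_Nil[OF d i t]])
  moreover have "MC t l"
    unfolding MC_def by (simp add: dist)
  ultimately show ?thesis
    using True L by (intro exI[of _ l]) (auto simp: l_def max_root_leaf_dist_def)
next
  case False
  let ?e0 = "take 1 (leafpos t i)"
  define l where "l e = (if e = ?e0 then L else 0)" for e
  have e0: "?e0 \<in> path_edges t i" "?e0 \<in> edges t"
    using top_edge_in_path_edges[OF d i t] path_edges_subset_edges by blast+
  have "(\<Sum>e\<in>path_edges t i. l e * c e) = (\<Sum>e\<in>path_edges t i. if e = ?e0 then L * c e else 0)"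
    by (intro sum.cong) (simp_all add: l_def)
  then have "(\<Sum>e\<in>path_edges t i. l e * c e) = c ?e0 * L"
    using e0(1) by simp
  moreover have "(\<Sum>e\<in>edges t. l e) = L"
    using e0(2) by (simp add: l_def)
  ultimately show ?thesis
    using False L by (intro exI[of _ l]) (simp add: l_def max_root_leaf_dist_def)
qed

lemma admissible_convex_combination:
  assumes "\<forall>e\<in>edges t. 0 \<le> l0 e" "(\<Sum>e\<in>edges t. l0 e) = L" "admissible t L l1"
    and "0 < \<delta>" "\<delta> \<le> 1"
  shows "admissible t L (\<lambda>e. (1 - \<delta>) * l0 e + \<delta> * l1 e)"
proof -
  have "0 < (1 - \<delta>) * l0 e + \<delta> * l1 e" if "e \<in> edges t" for e
    using assms that by (intro add_nonneg_pos) (auto simp: admissible_def)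
  moreover have "(\<Sum>e\<in>edges t. (1 - \<delta>) * l0 e + \<delta> * l1 e) = (1 - \<delta>) * L + \<delta> * L"
    using assms by (simp add: admissible_def sum.distrib flip: sum_distrib_left)
  ultimately show ?thesis
    by (simp add: admissible_def algebra_simps)
qed

lemma MC_linear_combination:
  assumes "MC t l0" "MC t l1"
  shows "MC t (\<lambda>e. a * l0 e + b * l1 e)"
proof -
  have dist: "root_leaf_dist t (\<lambda>e. a * l0 e + b * l1 e) i
      = a * root_leaf_dist t l0 i + b * root_leaf_dist t l1 i" for i
    by (simp add: root_leaf_dist_def sum.distrib sum_distrib_left)
  show ?thesis
    unfolding MC_def
  proof (intro ballI)
    fix i j assume "i \<in> leaves t" "j \<in> leaves t"
    with assms have "root_leaf_dist t l0 i = root_leaf_dist t l0 j"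
      "root_leaf_dist t l1 i = root_leaf_dist t l1 j"
      unfolding MC_def by blast+
    then show "root_leaf_dist t (\<lambda>e. a * l0 e + b * l1 e) i = root_leaf_dist t (\<lambda>e. a * l0 e + b * l1 e) j"
      by (simp add: dist)
  qed
qed

lemma convex_combination_gt:
  fixes a b y :: real
  assumes "y < a"
  shows "\<exists>\<delta>>0. \<delta> \<le> 1 \<and> y < (1 - \<delta>) * a + \<delta> * b"
proof (cases "y < b")
  case True
  then show ?thesis
    by (intro exI[of _ 1]) simp
next
  case False
  define \<delta> where "\<delta> = (a - y) / (2 * (a - b))"
  have "0 < \<delta>" "\<delta> \<le> 1 / 2"
    using assms False by (simp_all add: \<delta>_def)
  moreover have "(1 - \<delta>) * a + \<delta> * b = a - \<delta> * (a - b)"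
    by (simp add: algebra_simps)
  moreover have "\<delta> * (a - b) = (a - y) / 2"
    using assms False by (simp add: \<delta>_def field_simps)
  moreover have "y < a - (a - y) / 2"
    using assms by (simp add: field_simps)
  ultimately show ?thesis
    by (intro exI[of _ \<delta>]) auto
qed

lemma exists_admissible_path_sum_gt:
  assumes t: "t \<in> RB n" and n: "2 \<le> n" and i: "i \<in> {1..n}" and L: "0 < L"
    and y: "y < c (take 1 (leafpos t i)) * max_root_leaf_dist mc L"
  shows "\<exists>l. admissible t L l \<and> (mc \<longrightarrow> MC t l) \<and> y < (\<Sum>e\<in>path_edges t i. l e * c e)"
proof -
  have d: "distinct (leaf_list t)" and i': "i \<in> set (leaf_list t)"
    using RB_distinct[OF t] RB_set_leaf_list[OF t] i by auto
  obtain t1 t2 where t12: "t = Node t1 t2"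
    using RB_Node[OF t n] by blast
  obtain l0 where l0: "\<forall>e\<in>edges t. 0 \<le> l0 e" "(\<Sum>e\<in>edges t. l0 e) = L" "mc \<longrightarrow> MC t l0"
    "(\<Sum>e\<in>path_edges t i. l0 e * c e) = c (take 1 (leafpos t i)) * max_root_leaf_dist mc L"
    using exists_top_concentrated_lengths[OF d i' t12 less_imp_le[OF L]] by blast
  obtain l1 where l1: "admissible t L l1" "MC t l1"
    using exists_admissible_MC[OF d _ L] t12 by (fastforce simp: edges_def)
  obtain \<delta> where \<delta>: "0 < \<delta>" "\<delta> \<le> 1"
    "y < (1 - \<delta>) * (\<Sum>e\<in>path_edges t i. l0 e * c e) + \<delta> * (\<Sum>e\<in>path_edges t i. l1 e * c e)"
    using convex_combination_gt[OF y[folded l0(4)]] by blast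
  define l where "l e = (1 - \<delta>) * l0 e + \<delta> * l1 e" for e
  have "admissible t L l"
    unfolding l_def by (rule admissible_convex_combination) (use l0 l1 \<delta> in auto)
  moreover have "mc \<longrightarrow> MC t l"
    using l0(3) l1(2) MC_linear_combination unfolding l_def by blast
  moreover have "(\<Sum>e\<in>path_edges t i. l e * c e)
      = (1 - \<delta>) * (\<Sum>e\<in>path_edges t i. l0 e * c e) + \<delta> * (\<Sum>e\<in>path_edges t i. l1 e * c e)"
    by (simp add: l_def distrib_right sum.distrib sum_distrib_left mult.assoc)
  ultimately show ?thesis
    using \<delta>(3) by auto
qed

lemma Sup_path_sums:
  fixes c :: "btree \<Rightarrow> nat \<Rightarrow> bool list \<Rightarrow> real"
  assumes n: "2 \<le> n" and L: "0 < L" and C: "0 \<le> C"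
    and le: "\<And>t i e. t \<in> RB n \<Longrightarrow> i \<in> {1..n} \<Longrightarrow> e \<in> path_edges t i \<Longrightarrow> c t i e \<le> C"
    and t0: "t0 \<in> RB n" and i0: "i0 \<in> {1..n}" and c0: "c t0 i0 (take 1 (leafpos t0 i0)) = C"
  shows "Sup {\<Sum>e\<in>path_edges t i. l e * c t i e | t l i.
      t \<in> RB n \<and> i \<in> {1..n} \<and> admissible t L l \<and> (mc \<longrightarrow> MC t l)} = C * max_root_leaf_dist mc L"
    (is "Sup ?S = ?B")
proof (rule cSup_eq)
  fix x assume "x \<in> ?S"
  then obtain t l i where x: "x = (\<Sum>e\<in>path_edges t i. l e * c t i e)" and t: "t \<in> RB n"
    and i: "i \<in> {1..n}" and adm: "admissible t L l" and mc: "mc \<longrightarrow> MC t l"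
    by blast
  have "x \<le> C * root_leaf_dist t l i"
    unfolding x using le[OF t i] by (intro path_sum_le[OF adm]) auto
  also have "\<dots> \<le> ?B"
    using root_leaf_dist_le_max[OF t n i adm mc] C by (rule mult_left_mono)
  finally show "x \<le> ?B" .
next
  fix y assume ub: "\<And>x. x \<in> ?S \<Longrightarrow> x \<le> y"
  show "?B \<le> y"
  proof (rule ccontr)
    assume "\<not> ?B \<le> y"
    then obtain l where l: "admissible t0 L l" "mc \<longrightarrow> MC t0 l"
      and gt: "y < (\<Sum>e\<in>path_edges t0 i0. l e * c t0 i0 e)"
      using exists_admissible_path_sum_gt[OF t0 n i0 L, of y "c t0 i0" mc] c0 by auto
    with t0 i0 have "(\<Sum>e\<in>path_edges t0 i0. l e * c t0 i0 e) \<in> ?S"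
      by blast
    with ub gt show False
      by fastforce
  qed
qed

section \<open>Extremal trees\<close>

fun caterpillar :: "nat list \<Rightarrow> btree" where
  "caterpillar [] = Leaf 0"
| "caterpillar [a] = Leaf a"
| "caterpillar (a # b # r) = Node (Leaf a) (caterpillar (b # r))"

lemma leaf_list_caterpillar: "xs \<noteq> [] \<Longrightarrow> leaf_list (caterpillar xs) = xs"
  by (induction xs rule: caterpillar.induct) auto

lemma caterpillar_last_leaf:
  "xs \<noteq> [] \<Longrightarrow> replicate (length xs - 1) True \<in> positions (caterpillar xs) \<and>
    subtree (caterpillar xs) (replicate (length xs - 1) True) = Leaf (last xs)"
  by (induction xs rule: caterpillar.induct) auto

definition caterpillar_pair :: "nat \<Rightarrow> nat \<Rightarrow> btree" where
  "caterpillar_pair m n = Node (caterpillar [1..<m+1]) (caterpillar [m+1..<n+1])"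

lemma leaf_list_caterpillar_pair:
  assumes "1 \<le> m" "m < n"
  shows "leaf_list (caterpillar_pair m n) = [1..<n+1]"
proof -
  have "[1..<n+1] = [1..<m+1] @ [m+1..<n+1]"
    using assms upt_add_eq_append[of 1 "m+1" "n-m"] by simp
  with assms show ?thesis
    by (simp add: caterpillar_pair_def leaf_list_caterpillar)
qed

lemma caterpillar_pair_RB: "1 \<le> m \<Longrightarrow> m < n \<Longrightarrow> caterpillar_pair m n \<in> RB n"
  by (simp add: RB_def leaf_list_caterpillar_pair atLeastLessThanSuc_atLeastAtMost del: upt_Suc)

lemma leafpos_caterpillar_pair_last:
  assumes "1 \<le> m" "m < n"
  shows "leafpos (caterpillar_pair m n) m = False # replicate (m - 1) True"
proof (rule leafpos_eqI)
  show "distinct (leaf_list (caterpillar_pair m n))"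
    using assms by (simp add: leaf_list_caterpillar_pair)
  show "False # replicate (m - 1) True \<in> positions (caterpillar_pair m n)"
    "subtree (caterpillar_pair m n) (False # replicate (m - 1) True) = Leaf m"
    using caterpillar_last_leaf[of "[1..<m+1]"] assms by (simp_all add: caterpillar_pair_def)
qed

lemma leafpos_caterpillar_pair_first:
  assumes "2 \<le> m" "m < n"
  shows "leafpos (caterpillar_pair m n) 1 = [False, False]"
proof (rule leafpos_eqI)
  have "[1..<m+1] = 1 # 2 # [3..<m+1]"
    using assms by (simp add: upt_conv_Cons numeral_3_eq_3)
  then show "[False, False] \<in> positions (caterpillar_pair m n)"
    "subtree (caterpillar_pair m n) [False, False] = Leaf 1"
    by (simp_all add: caterpillar_pair_def)
  show "distinct (leaf_list (caterpillar_pair m n))"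
    using assms by (simp add: leaf_list_caterpillar_pair)
qed

lemma ndesc_caterpillar_pair:
  "1 \<le> m \<Longrightarrow> m < n \<Longrightarrow> ndesc (caterpillar_pair m n) [False] = m"
  by (simp add: ndesc_eq_length leaf_list_caterpillar_pair)
    (simp add: caterpillar_pair_def leaf_list_caterpillar)

lemma Delta_FP_ES_eq:
  assumes n: "2 \<le> n" and L: "0 < L"
  shows "Delta_FP_ES mc n L = lambda n * max_root_leaf_dist mc L"
proof -
  obtain m where m: "1 \<le> m" "m < n" "1 / real m - 1 / 2 ^ (m - 1) = lambda n"
    using lambda_attained[OF n] by blast
  let ?t = "caterpillar_pair m n"
  show ?thesis
    unfolding Delta_FP_ES_def FP_minus_ES
  proof (rule Sup_path_sums[OF n L _ _ caterpillar_pair_RB[OF m(1,2)]])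
    show "0 \<le> lambda n"
      by (simp add: lambda_def)
    show "1 / real (ndesc t e) - 1 / 2 ^ kdist t e i \<le> lambda n"
      if "t \<in> RB n" "i \<in> {1..n}" "e \<in> path_edges t i" for t i e
      using path_edge_ndesc_kdist[OF RB_distinct[OF that(1)] _ that(3)] RB_set_leaf_list[OF that(1)]
        RB_length_leaf_list[OF that(1)] that(2)
      by (intro FP_coefficient_le_lambda) auto
    show "m \<in> {1..n}"
      using m by simp
    show "1 / real (ndesc ?t (take 1 (leafpos ?t m))) - 1 / 2 ^ kdist ?t (take 1 (leafpos ?t m)) m
        = lambda n"
      using m by (simp add: leafpos_caterpillar_pair_last ndesc_caterpillar_pair kdist_def)
  qed
qed

lemma Delta_ES_FP_eq:
  assumes n: "3 \<le> n" and L: "0 < L"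
  shows "Delta_ES_FP mc n L = (1 / 2 - 1 / real (n - 1)) * max_root_leaf_dist mc L"
proof -
  let ?t = "caterpillar_pair (n - 1) n"
  have m: "1 \<le> n - 1" "n - 1 < n"
    using n by simp_all
  show ?thesis
    unfolding Delta_ES_FP_def ES_minus_FP
  proof (rule Sup_path_sums[OF _ L _ _ caterpillar_pair_RB[OF m]])
    show "2 \<le> n" "1 \<in> {1..n}"
      using n by simp_all
    show "0 \<le> 1 / 2 - 1 / real (n - 1)"
      using n by (simp add: frac_le)
    show "1 / 2 ^ kdist t e i - 1 / real (ndesc t e) \<le> 1 / 2 - 1 / real (n - 1)"
      if "t \<in> RB n" "i \<in> {1..n}" "e \<in> path_edges t i" for t i e
      using path_edge_ndesc_kdist[OF RB_distinct[OF that(1)] _ that(3)] RB_set_leaf_list[OF that(1)]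
        RB_length_leaf_list[OF that(1)] that(2) n
      by (intro ES_coefficient_le) auto
    show "1 / 2 ^ kdist ?t (take 1 (leafpos ?t 1)) 1 - 1 / real (ndesc ?t (take 1 (leafpos ?t 1)))
        = 1 / 2 - 1 / real (n - 1)"
      using leafpos_caterpillar_pair_first[of "n - 1" n] ndesc_caterpillar_pair[OF m] n
      by (simp add: kdist_def)
  qed
qed

theorem theorem3:
  fixes L :: real and n :: nat
  assumes "L > 0"
  shows "(n \<ge> 2 \<longrightarrow> Delta_FP_ES False n L = lambda n * L)
       \<and> (n \<ge> 3 \<longrightarrow> Delta_ES_FP False n L = (1/2 - 1 / real (n - 1)) * L)
       \<and> (n \<ge> 2 \<longrightarrow> Delta_FP_ES True n L = lambda n * L / 2)
       \<and> (n \<ge> 3 \<longrightarrow> Delta_ES_FP True n L = (1/2 - 1 / real (n - 1)) * L / 2)"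
  using Delta_FP_ES_eq[OF _ assms] Delta_ES_FP_eq[OF _ assms]
  by (simp add: max_root_leaf_dist_def)

end
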